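(* Consider a ring gossip network with a source and $n$ end-nodes as described in the context, and let $\rho=\lambda_e/\lambda$. Let $F^{(n)}=\lim_{t\to\infty}\mathbb{E}[F_1(t)]$ denote the average binary freshness of a single end-node. Then $F^{(n)}\to0$ as $n\to\infty$, decreasing as $\left(\frac{1}{\rho}+\frac{1}{\rho^2}\right)n^{-1}$, i.e., $\lim_{n\to\infty}nF^{(n)}=\frac{1}{\rho}+\frac{1}{\rho^2}$.
   Context: Model: The information at the source is updated (a new version is generated) according to a Poisson process of rate $\lambda_e>0$. The source sends its current version to each end-node $j\in\{1,\dots,n\}$ according to a Poisson process of rate $\lambda/n$, where $\lambda>0$. The end-nodes form a bidirectional ring: each end-node $j$ sends its stored version to each of its two ring neighbors $j-1$ and $j+1$ (indices mod $n$) according to a Poisson process of rate $\lambda/2$ each. All processes are independent. A node receiving a version keeps the fresher of its stored and received versions. The binary freshness $F_j(t)$ of node $j$ is $1$ if node $j$ stores the current source version at time $t$ and $0$ otherwise; thus it becomes $0$ whenever the source generates a new version, becomes $1$ when the source updates node $j$, and becomes $\max(F_i,F_j)$ when node $i$ updates node $j$. *)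

theory Defs
  imports "HOL-Analysis.Analysis"
begin

text \<open>State of the ring network with n end-nodes (indexed 0..n-1; the paper's node j
is our node j-1): the set of end-nodes that currently store the current source version,
i.e. the set of j with binary freshness F_j = 1.\<close>

definition gossip_upd :: "nat \<Rightarrow> nat \<Rightarrow> nat set \<Rightarrow> nat set" where
  "gossip_upd i j S = (if i \<in> S then insert j S else S)"

text \<open>Total rate of all independent Poisson clocks: generation (lambda_e),
source-to-node (n clocks of rate lambda/n), ring gossip (2n clocks of rate lambda/2).\<close>
definition total_rate :: "real \<Rightarrow> real \<Rightarrow> nat \<Rightarrow> real" where
  "total_rate le l n = le + real n * (l / real n) + real n * 2 * (l / 2)"

text \<open>One-event transition probability of the embedded (uniformized) chain: the
next event among all clocks is chosen proportionally to its rate.\<close>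
definition trans_prob :: "real \<Rightarrow> real \<Rightarrow> nat \<Rightarrow> nat set \<Rightarrow> nat set \<Rightarrow> real" where
  "trans_prob le l n S T =
     (le * (if T = {} then 1 else 0)
      + (\<Sum>j<n. (l / real n) * (if T = insert j S then 1 else 0))
      + (\<Sum>j<n. (l / 2) * (if T = gossip_upd j ((j + 1) mod n) S then 1 else 0)
                + (l / 2) * (if T = gossip_upd j ((j + n - 1) mod n) S then 1 else 0)))
     / total_rate le l n"

fun state_dist :: "real \<Rightarrow> real \<Rightarrow> nat \<Rightarrow> nat set \<Rightarrow> nat \<Rightarrow> nat set \<Rightarrow> real" where
  "state_dist le l n S0 0 T = (if T = S0 then 1 else 0)"
| "state_dist le l n S0 (Suc k) T =
     (\<Sum>S\<in>Pow {..<n}. state_dist le l n S0 k S * trans_prob le l n S T)"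

text \<open>E[F_1(t)]: the number of events in [0,t] is Poisson(q t), independent of the
event marks (superposition of the independent Poisson clocks).\<close>
definition expected_freshness :: "real \<Rightarrow> real \<Rightarrow> nat \<Rightarrow> nat set \<Rightarrow> real \<Rightarrow> real" where
  "expected_freshness le l n S0 t =
     (\<Sum>k. exp (- total_rate le l n * t) * (total_rate le l n * t) ^ k / fact k
          * (\<Sum>S\<in>{S\<in>Pow {..<n}. 0 \<in> S}. state_dist le l n S0 k S))"

definition avg_freshness :: "real \<Rightarrow> real \<Rightarrow> nat \<Rightarrow> nat set \<Rightarrow> real" where
  "avg_freshness le l n S0 = Lim at_top (expected_freshness le l n S0)"

end

theory Submission
  imports Defs
begin

text \<open>
  Let hit_prob k A be the probability that after k events of the uniformized chain some node of
  the set A is fresh. Conditioning on the last event, hit_prob (k + 1) A is a combination of the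
  values hit_prob k A' for explicit sets A': a new version makes the event impossible, a source
  update of a node of A makes it certain, and a message from i to a node of A replaces A by
  A \<union> {i} (gossip_upd_dual). Starting from A = {0} only arcs of the ring occur, and on an arc
  of length m the recursion has the fixed point f_n(m) = arc_freshness. Since every event is a
  new version with probability \<lambda>_e/q, the distance to the fixed point shrinks by the factor
  1 - \<lambda>_e/q per event, which after Poissonization gives the bound exp(-\<lambda>_e t); hence
  F^(n) = f_n(1).

  For the asymptotics, n f_n(m) satisfies, up to a perturbation of order m^2/n, the recursion
  (1 + \<kappa>) v(m) = \<kappa> m + \<kappa> v(m + 1) with \<kappa> = 1/\<rho>, whose affine solution is
  v(m) = \<kappa> m + \<kappa>^2. Errors contract by the factor \<kappa>/(1 + \<kappa>) from m + 1 to m, so the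
  boundary error at m = n is exponentially small at m = 1, and n f_n(1) tends to \<kappa> + \<kappa>^2.
\<close>

section \<open>Arcs of the ring\<close>

lemma mod_add_left_cancel_nat: "(s + t) mod n = (s + i) mod n \<longleftrightarrow> t mod n = i mod (n::nat)"
  by (auto simp: nat_mod_eq_iff)

lemma sum_rotate:
  fixes G :: "nat \<Rightarrow> 'a::comm_monoid_add"
  shows "(\<Sum>j<n. G j) = (\<Sum>i<n. G ((s + i) mod n))"
proof -
  have inj: "inj_on (\<lambda>i. (s + i) mod n) {..<n}"
    by (auto simp: inj_on_def mod_add_left_cancel_nat)
  have "(\<lambda>i. (s + i) mod n) ` {..<n} = {..<n}"
    by (rule endo_inj_surj) (auto simp: inj)
  then show ?thesis
    using sum.reindex[OF inj, of G] by simp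
qed

lemma sum_lessThan_if_eq:
  fixes X Y :: real
  assumes "i0 < n"
  shows "(\<Sum>i<n. if i = i0 then X else Y) = (real n - 1) * Y + X"
proof -
  have "(\<Sum>i<n. if i = i0 then X else Y) = (\<Sum>i<n. Y + (if i = i0 then X - Y else 0))"
    by (rule sum.cong) auto
  also have "\<dots> = real n * Y + (X - Y)"
    using assms by (simp add: sum.distrib)
  finally show ?thesis
    by (simp add: algebra_simps)
qed

definition arc :: "nat \<Rightarrow> nat \<Rightarrow> nat \<Rightarrow> nat set" where
  "arc n s m = (\<lambda>i. (s + i) mod n) ` {..<m}"

lemma mem_arc_iff:
  assumes "m \<le> n"
  shows "(s + t) mod n \<in> arc n s m \<longleftrightarrow> t mod n < m"
proof
  assume "(s + t) mod n \<in> arc n s m"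
  then obtain i where "i < m" and "(s + t) mod n = (s + i) mod n"
    by (auto simp: arc_def)
  then show "t mod n < m"
    using assms by (simp add: mod_add_left_cancel_nat)
next
  assume "t mod n < m"
  then show "(s + t) mod n \<in> arc n s m"
    unfolding arc_def by (intro image_eqI[of _ _ "t mod n"]) (auto simp: mod_add_right_eq)
qed

lemma arc_eq_lessThan:
  assumes "0 < n" "n \<le> m"
  shows "arc n s m = {..<n}"
proof -
  have "j \<in> arc n s m" if "j < n" for j
  proof -
    define i where "i = (j + n - s mod n) mod n"
    have "(s + i) mod n = (s mod n + (j + n - s mod n)) mod n"
      unfolding i_def by (simp add: mod_add_left_eq mod_add_right_eq)
    also have "s mod n + (j + n - s mod n) = j + n"
      using mod_less_divisor[OF assms(1), of s] by linarith
    also have "(j + n) mod n = j"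
      using that by simp
    finally have "(s + i) mod n = j" .
    moreover have "i < m"
      using assms unfolding i_def by (meson mod_less_divisor order_less_le_trans)
    ultimately show ?thesis
      unfolding arc_def by (auto intro!: image_eqI[of _ _ i])
  qed
  then show ?thesis
    using assms(1) by (auto simp: arc_def)
qed

lemma arc_insert_succ: "insert ((s + m) mod n) (arc n s m) = arc n s (m + 1)"
  by (simp add: arc_def lessThan_Suc)

lemma arc_insert_pred:
  assumes "0 < n"
  shows "insert ((s + (n - 1)) mod n) (arc n s m) = arc n (s + n - 1) (m + 1)"
proof -
  have "(s + n - 1 + Suc i) mod n = (s + i) mod n" for i
  proof -
    have "s + n - 1 + Suc i = (s + i) + n"
      using assms by simp
    then show ?thesis
      by (simp only: mod_add_self2)
  qed
  moreover have "s + n - 1 = s + (n - 1)"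
    using assms by simp
  ultimately show ?thesis
    unfolding arc_def by (simp add: lessThan_Suc_eq_insert_0 image_image del: image_Suc_lessThan)
qed

lemma gossip_upd_arc_from_succ:
  assumes "i < n" "1 \<le> m" "m < n"
  shows "gossip_upd (((s + i) mod n + 1) mod n) ((s + i) mod n) (arc n s m)
    = (if i = n - 1 then arc n (s + n - 1) (m + 1) else arc n s m)"
proof -
  have succ: "((s + i) mod n + 1) mod n = (s + (i + 1)) mod n"
    by (simp add: mod_Suc_eq)
  have "gossip_upd ((s + (i + 1)) mod n) ((s + i) mod n) (arc n s m)
    = (if i = n - 1 then arc n (s + n - 1) (m + 1) else arc n s m)"
  proof (cases "i = n - 1")
    case True
    then have "(s + (i + 1)) mod n \<in> arc n s m"
      using assms mem_arc_iff[of m n s "i + 1"] by simp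
    moreover have "insert ((s + i) mod n) (arc n s m) = arc n (s + n - 1) (m + 1)"
      using True assms arc_insert_pred[of n s m] by simp
    ultimately show ?thesis
      unfolding gossip_upd_def using True by simp
  next
    case False
    then have "(s + (i + 1)) mod n \<in> arc n s m \<longleftrightarrow> i + 1 < m"
      using assms mem_arc_iff[of m n s "i + 1"] by simp
    moreover have "(s + i) mod n \<in> arc n s m \<longleftrightarrow> i < m"
      using assms mem_arc_iff[of m n s i] by simp
    ultimately show ?thesis
      using False by (auto simp: gossip_upd_def insert_absorb)
  qed
  then show ?thesis
    by (simp only: succ)
qed

lemma gossip_upd_arc_from_pred:
  assumes "i < n" "1 \<le> m" "m < n"
  shows "gossip_upd (((s + i) mod n + n - 1) mod n) ((s + i) mod n) (arc n s m)
    = (if i = m then arc n s (m + 1) else arc n s m)"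
proof -
  have "(s + i) mod n + n - 1 = (s + i) mod n + (n - 1)"
    using assms by simp
  then have pred: "((s + i) mod n + n - 1) mod n = (s + (i + (n - 1))) mod n"
    by (simp add: mod_add_left_eq add.assoc)
  have "gossip_upd ((s + (i + (n - 1))) mod n) ((s + i) mod n) (arc n s m)
    = (if i = m then arc n s (m + 1) else arc n s m)"
  proof (cases "i = 0")
    case True
    then have "(s + (i + (n - 1))) mod n \<notin> arc n s m"
      using assms mem_arc_iff[of m n s "i + (n - 1)"] by simp
    moreover have "i \<noteq> m"
      using True assms by simp
    ultimately show ?thesis
      unfolding gossip_upd_def by simp
  next
    case False
    then have "i + (n - 1) = (i - 1) + n"
      using assms by simp
    then have "(s + (i + (n - 1))) mod n = (s + (i - 1)) mod n"
      by (metis add.assoc mod_add_self2)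
    then have "(s + (i + (n - 1))) mod n \<in> arc n s m \<longleftrightarrow> i - 1 < m"
      using assms mem_arc_iff[of m n s "i - 1"] by simp
    moreover have "(s + i) mod n \<in> arc n s m \<longleftrightarrow> i < m"
      using assms mem_arc_iff[of m n s i] by simp
    ultimately show ?thesis
      using False arc_insert_succ[of s m n] by (auto simp: gossip_upd_def insert_absorb)
  qed
  then show ?thesis
    by (simp only: pred)
qed

lemma gossip_upd_lessThan: "j < n \<Longrightarrow> gossip_upd i j {..<n} = {..<n}"
  by (auto simp: gossip_upd_def)

lemma sum_gossip_upd_arc_from_succ:
  assumes "0 < n" "1 \<le> m"
  shows "(\<Sum>j<n. F (gossip_upd ((j + 1) mod n) j (arc n s m)))
    = (real n - 1) * F (arc n s m) + (F (arc n (s + n - 1) (m + 1)) :: real)"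
proof (cases "n \<le> m")
  case True
  then show ?thesis
    using assms by (simp add: arc_eq_lessThan gossip_upd_lessThan algebra_simps)
next
  case False
  have "(\<Sum>j<n. F (gossip_upd ((j + 1) mod n) j (arc n s m)))
    = (\<Sum>i<n. F (gossip_upd (((s + i) mod n + 1) mod n) ((s + i) mod n) (arc n s m)))"
    by (rule sum_rotate)
  also have "\<dots> = (\<Sum>i<n. if i = n - 1 then F (arc n (s + n - 1) (m + 1)) else F (arc n s m))"
  proof (rule sum.cong[OF refl])
    fix i assume "i \<in> {..<n}"
    with False assms show "F (gossip_upd (((s + i) mod n + 1) mod n) ((s + i) mod n) (arc n s m))
      = (if i = n - 1 then F (arc n (s + n - 1) (m + 1)) else F (arc n s m))"
      by (subst gossip_upd_arc_from_succ) auto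
  qed
  also have "\<dots> = (real n - 1) * F (arc n s m) + F (arc n (s + n - 1) (m + 1))"
    using assms by (intro sum_lessThan_if_eq) simp
  finally show ?thesis .
qed

lemma sum_gossip_upd_arc_from_pred:
  assumes "0 < n" "1 \<le> m"
  shows "(\<Sum>j<n. F (gossip_upd ((j + n - 1) mod n) j (arc n s m)))
    = (real n - 1) * F (arc n s m) + (F (arc n s (m + 1)) :: real)"
proof (cases "n \<le> m")
  case True
  then show ?thesis
    using assms by (simp add: arc_eq_lessThan gossip_upd_lessThan algebra_simps)
next
  case False
  have "(\<Sum>j<n. F (gossip_upd ((j + n - 1) mod n) j (arc n s m)))
    = (\<Sum>i<n. F (gossip_upd (((s + i) mod n + n - 1) mod n) ((s + i) mod n) (arc n s m)))"
    by (rule sum_rotate)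
  also have "\<dots> = (\<Sum>i<n. if i = m then F (arc n s (m + 1)) else F (arc n s m))"
  proof (rule sum.cong[OF refl])
    fix i assume "i \<in> {..<n}"
    with False assms show "F (gossip_upd (((s + i) mod n + n - 1) mod n) ((s + i) mod n) (arc n s m))
      = (if i = m then F (arc n s (m + 1)) else F (arc n s m))"
      by (subst gossip_upd_arc_from_pred) auto
  qed
  also have "\<dots> = (real n - 1) * F (arc n s m) + F (arc n s (m + 1))"
    using False by (intro sum_lessThan_if_eq) simp
  finally show ?thesis .
qed

lemma sum_if_mem_arc:
  fixes a b :: real
  assumes "m \<le> n"
  shows "(\<Sum>j<n. if j \<in> arc n s m then a else b) = real m * a + (real n - real m) * b"
proof -
  have "(\<Sum>j<n. if j \<in> arc n s m then a else b)
    = (\<Sum>i<n. if (s + i) mod n \<in> arc n s m then a else b)"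
    by (rule sum_rotate)
  also have "\<dots> = (\<Sum>i<n. if i < m then a else b)"
    using mem_arc_iff[OF assms] by (intro sum.cong) auto
  also have "\<dots> = (\<Sum>i<m. a) + (\<Sum>i\<in>{m..<n}. b)"
  proof -
    have "{..<n} \<inter> {i. i < m} = {..<m}" "{..<n} \<inter> - {i. i < m} = {m..<n}"
      using assms by auto
    then show ?thesis
      by (simp add: sum.If_cases)
  qed
  also have "\<dots> = real m * a + (real n - real m) * b"
    using assms by (simp add: of_nat_diff)
  finally show ?thesis .
qed

lemma gossip_upd_dual: "A \<inter> gossip_upd i j S \<noteq> {} \<longleftrightarrow> gossip_upd j i A \<inter> S \<noteq> {}"
  by (auto simp: gossip_upd_def)

section \<open>Stationary freshness of an arc\<close>

lemma total_rate_eq: "0 < n \<Longrightarrow> total_rate le l n = le + l + real n * l"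
  by (simp add: total_rate_def)

text \<open>
  On an arc of m < n nodes a new version (rate \<lambda>_e) clears the arc, the source hits it at rate
  \<lambda> m/n, and a message from one of its two outside neighbours (total rate \<lambda>) extends it by a
  node; the full ring only reacts to new versions and to the source.
\<close>
function arc_freshness :: "real \<Rightarrow> real \<Rightarrow> nat \<Rightarrow> nat \<Rightarrow> real" where
  "arc_freshness le l n m = (if n \<le> m then l / (le + l)
     else (l * real m / real n + l * arc_freshness le l n (Suc m)) / (le + l * real m / real n + l))"
  by auto
termination
  by (relation "Wellfounded.measure (\<lambda>(le, l, n, m). n - m)") auto

declare arc_freshness.simps[simp del]

lemma arc_freshness_full: "n \<le> m \<Longrightarrow> arc_freshness le l n m = l / (le + l)"
  by (simp add: arc_freshness.simps[of le l n m])

lemma arc_freshness_less: "m < n \<Longrightarrow> arc_freshness le l n m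
    = (l * real m / real n + l * arc_freshness le l n (Suc m)) / (le + l * real m / real n + l)"
  by (simp add: arc_freshness.simps[of le l n m])

locale positive_rates =
  fixes le l :: real
  assumes le_pos: "0 < le" and l_pos: "0 < l"
begin

lemma arc_freshness_bounds: "0 \<le> arc_freshness le l n m \<and> arc_freshness le l n m \<le> 1"
proof (induction "n - m" arbitrary: m)
  case 0
  then show ?case
    using le_pos l_pos by (simp add: arc_freshness_full)
next
  case (Suc d)
  then have m: "m < n"
    by simp
  have IH: "0 \<le> arc_freshness le l n (Suc m) \<and> arc_freshness le l n (Suc m) \<le> 1"
    using Suc.hyps by simp
  let ?src = "l * real m / real n"
  have den: "0 < le + ?src + l"
    using le_pos l_pos by (simp add: add_pos_nonneg)
  have "0 \<le> ?src + l * arc_freshness le l n (Suc m)"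
    using IH l_pos by simp
  moreover have "?src + l * arc_freshness le l n (Suc m) \<le> le + ?src + l"
    using IH le_pos l_pos mult_left_le[of "arc_freshness le l n (Suc m)" l] by linarith
  moreover have "arc_freshness le l n m = (?src + l * arc_freshness le l n (Suc m)) / (le + ?src + l)"
    using m by (rule arc_freshness_less)
  ultimately show ?case
    using den by (simp add: divide_le_eq_1)
qed

lemma arc_freshness_rec:
  assumes "m < n"
  shows "(le + l * real m / real n + l) * arc_freshness le l n m
    = l * real m / real n + l * arc_freshness le l n (Suc m)"
proof -
  have "0 < le + l * real m / real n + l"
    using le_pos l_pos by (simp add: add_pos_nonneg)
  then show ?thesis
    using arc_freshness_less[OF assms] by simp
qed

lemma arc_freshness_eq:
  assumes "1 \<le> m" "m \<le> n"
  shows "total_rate le l n * arc_freshness le l n m = l * real m / real n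
     + (l * (real n - real m) / real n + l * (real n - 1)) * arc_freshness le l n m
     + l * arc_freshness le l n (m + 1)"
proof (cases "m < n")
  case True
  let ?c = "le + l * real m / real n + l" and ?d = "l * (real n - real m) / real n + l * (real n - 1)"
  have rec: "?c * arc_freshness le l n m = l * real m / real n + l * arc_freshness le l n (m + 1)"
    using arc_freshness_rec[OF True] by simp
  have "l * real m / real n + l * (real n - real m) / real n = l * (real m + (real n - real m)) / real n"
    by (simp only: distrib_left add_divide_distrib)
  also have "\<dots> = l"
    using True by simp
  finally have "l * real m / real n + l * (real n - real m) / real n = l" .
  moreover have "l * (real n - 1) = real n * l - l"
    by (simp add: algebra_simps)
  ultimately have "total_rate le l n = ?c + ?d"
    using True by (simp add: total_rate_eq)
  then have "total_rate le l n * arc_freshness le l n m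
      = ?c * arc_freshness le l n m + ?d * arc_freshness le l n m"
    by (simp only: distrib_right)
  also have "\<dots> = l * real m / real n + l * arc_freshness le l n (m + 1) + ?d * arc_freshness le l n m"
    by (simp only: rec)
  finally show ?thesis
    by (simp only: ac_simps)
next
  case False
  then have "m = n"
    using assms by simp
  let ?f = "arc_freshness le l n n"
  have "total_rate le l n * ?f = (le + l) * ?f + l * (real n - 1) * ?f + l * ?f"
    using assms by (simp add: total_rate_eq algebra_simps)
  also have "(le + l) * ?f = l"
    using le_pos l_pos by (simp add: arc_freshness_full)
  finally have "total_rate le l n * ?f = l + l * (real n - 1) * ?f + l * ?f" .
  moreover have "arc_freshness le l n (n + 1) = ?f"
    by (simp add: arc_freshness_full)
  ultimately show ?thesis
    using \<open>m = n\<close> assms by simp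
qed

end

section \<open>Convergence of the expected freshness\<close>

lemma poisson_mixture_dist_le:
  fixes b :: "nat \<Rightarrow> real" and c r x :: real
  assumes "0 \<le> x" "0 \<le> r" "\<And>k. \<bar>b k - c\<bar> \<le> r ^ k"
  shows "\<bar>(\<Sum>k. exp (- x) * x ^ k / fact k * b k) - c\<bar> \<le> exp (- (1 - r) * x)"
proof -
  define w where "w k = exp (- x) * x ^ k / fact k" for k
  have exp_sums: "(\<lambda>k. y ^ k / fact k) sums exp y" for y :: real
    using exp_converges[of y] by (simp add: divide_inverse mult.commute)
  have w_nonneg: "0 \<le> w k" for k
    unfolding w_def using assms(1) by simp
  have "(\<lambda>k. exp (- x) * (x ^ k / fact k)) sums (exp (- x) * exp x)"
    by (rule sums_mult[OF exp_sums])
  then have w_sums: "w sums 1"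
    unfolding w_def by (simp add: exp_minus field_simps)
  have "(\<lambda>k. exp (- x) * ((x * r) ^ k / fact k)) sums (exp (- x) * exp (x * r))"
    by (rule sums_mult[OF exp_sums])
  moreover have "exp (- x) * exp (x * r) = exp (- (1 - r) * x)"
    by (simp add: exp_add[symmetric] algebra_simps)
  ultimately have wr_sums: "(\<lambda>k. w k * r ^ k) sums exp (- (1 - r) * x)"
    unfolding w_def by (simp add: power_mult_distrib field_simps)
  have dev_le: "\<bar>w k * (b k - c)\<bar> \<le> w k * r ^ k" for k
    using assms(3)[of k] w_nonneg[of k] by (simp add: abs_mult mult_left_mono)
  have dev_summable: "summable (\<lambda>k. \<bar>w k * (b k - c)\<bar>)"
    by (rule summable_comparison_test[OF _ sums_summable[OF wr_sums]]) (use dev_le in auto)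
  have "(\<lambda>k. w k * b k) = (\<lambda>k. w k * c + w k * (b k - c))"
    by (simp add: algebra_simps)
  moreover have "(\<lambda>k. w k * c) sums c"
    using sums_mult2[OF w_sums, of c] by simp
  ultimately have "(\<lambda>k. w k * b k) sums (c + (\<Sum>k. w k * (b k - c)))"
    using summable_rabs_cancel[OF dev_summable] by (simp add: sums_add summable_sums)
  then have "(\<Sum>k. w k * b k) - c = (\<Sum>k. w k * (b k - c))"
    by (simp add: sums_iff)
  also have "\<bar>\<dots>\<bar> \<le> (\<Sum>k. \<bar>w k * (b k - c)\<bar>)"
    by (rule summable_rabs[OF dev_summable])
  also have "\<dots> \<le> (\<Sum>k. w k * r ^ k)"
    by (rule suminf_le[OF dev_le dev_summable sums_summable[OF wr_sums]])
  also have "\<dots> = exp (- (1 - r) * x)"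
    using sums_unique[OF wr_sums] by simp
  finally show ?thesis
    by (simp add: w_def mult.assoc)
qed

locale ring_gossip = positive_rates +
  fixes n :: nat and S0 :: "nat set"
  assumes n_pos: "0 < n" and S0_sub: "S0 \<subseteq> {..<n}"
begin

abbreviation q :: real where "q \<equiv> total_rate le l n"

abbreviation P :: "nat \<Rightarrow> nat set \<Rightarrow> real" where "P \<equiv> state_dist le l n S0"

lemma total_rate_pos: "0 < q"
  using le_pos l_pos by (simp add: total_rate_eq[OF n_pos] add_pos_nonneg)

lemma sum_trans_prob:
  assumes "S \<in> Pow {..<n}"
  shows "(\<Sum>T\<in>Pow {..<n}. trans_prob le l n S T * g T) =
    (le * g {} + (\<Sum>j<n. l / n * g (insert j S))
     + (\<Sum>j<n. l / 2 * g (gossip_upd j ((j + 1) mod n) S)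
              + l / 2 * g (gossip_upd j ((j + n - 1) mod n) S))) / q"
proof -
  have delta: "(\<Sum>T\<in>Pow {..<n}. (if T = X then 1 else 0) * g T) = g X" if "X \<in> Pow {..<n}" for X
    using that by (simp add: mult_delta_left del: Pow_iff)
  have closed: "insert j S \<in> Pow {..<n}" "gossip_upd j i S \<in> Pow {..<n}" if "i < n" "j < n" for i j
    using assms that by (auto simp: gossip_upd_def)
  have "(\<Sum>T\<in>Pow {..<n}. trans_prob le l n S T * g T) =
     (\<Sum>T\<in>Pow {..<n}. (le * ((if T = {} then 1 else 0) * g T)
      + (\<Sum>j<n. (l / real n) * ((if T = insert j S then 1 else 0) * g T))
      + (\<Sum>j<n. (l / 2) * ((if T = gossip_upd j ((j + 1) mod n) S then 1 else 0) * g T)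
                + (l / 2) * ((if T = gossip_upd j ((j + n - 1) mod n) S then 1 else 0) * g T))) / q)"
    unfolding trans_prob_def
    by (intro sum.cong refl) (simp add: sum_distrib_right sum_distrib_left sum_divide_distrib algebra_simps)
  also have "\<dots> = (le * (\<Sum>T\<in>Pow {..<n}. (if T = {} then 1 else 0) * g T)
      + (\<Sum>j<n. (l / real n) * (\<Sum>T\<in>Pow {..<n}. (if T = insert j S then 1 else 0) * g T))
      + (\<Sum>j<n. (l / 2) * (\<Sum>T\<in>Pow {..<n}. (if T = gossip_upd j ((j + 1) mod n) S then 1 else 0) * g T)
                + (l / 2) * (\<Sum>T\<in>Pow {..<n}. (if T = gossip_upd j ((j + n - 1) mod n) S then 1 else 0) * g T))) / q"
    by (simp add: sum_divide_distrib[symmetric] sum.distrib sum_distrib_left sum.swap[of _ "Pow {..<n}"])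
  also have "\<dots> = (le * g {} + (\<Sum>j<n. l / n * g (insert j S))
     + (\<Sum>j<n. l / 2 * g (gossip_upd j ((j + 1) mod n) S)
              + l / 2 * g (gossip_upd j ((j + n - 1) mod n) S))) / q"
    using n_pos closed by (simp add: delta)
  finally show ?thesis .
qed

lemma sum_state_dist_Suc:
  "(\<Sum>T\<in>Pow {..<n}. P (Suc k) T * g T) = (\<Sum>S\<in>Pow {..<n}. P k S *
    ((le * g {} + (\<Sum>j<n. l / n * g (insert j S))
     + (\<Sum>j<n. l / 2 * g (gossip_upd j ((j + 1) mod n) S)
              + l / 2 * g (gossip_upd j ((j + n - 1) mod n) S))) / q))"
proof -
  have "(\<Sum>T\<in>Pow {..<n}. P (Suc k) T * g T) =
     (\<Sum>T\<in>Pow {..<n}. \<Sum>S\<in>Pow {..<n}. P k S * (trans_prob le l n S T * g T))"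
    by (simp add: sum_distrib_right mult.assoc)
  also have "\<dots> = (\<Sum>S\<in>Pow {..<n}. P k S * (\<Sum>T\<in>Pow {..<n}. trans_prob le l n S T * g T))"
    by (subst sum.swap) (simp add: sum_distrib_left)
  finally show ?thesis
    by (simp add: sum_trans_prob)
qed

lemma sum_state_dist: "(\<Sum>S\<in>Pow {..<n}. P k S) = 1"
proof (induction k)
  case 0
  then show ?case
    using S0_sub by simp
next
  case (Suc k)
  have "(le + real n * (l / n) + real n * l) / q = 1"
    using total_rate_pos n_pos by (simp add: total_rate_eq)
  then show ?case
    using sum_state_dist_Suc[of k "\<lambda>_. 1"] Suc by simp
qed

definition hit_prob :: "nat \<Rightarrow> nat set \<Rightarrow> real" where
  "hit_prob k A = (\<Sum>S\<in>Pow {..<n}. P k S * of_bool (A \<inter> S \<noteq> {}))"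

lemma hit_prob_0: "hit_prob 0 A = of_bool (A \<inter> S0 \<noteq> {})"
  using S0_sub by (simp add: hit_prob_def mult_delta_left
      del: sum_of_bool_eq sum_mult_of_bool_eq sum_of_bool_mult_eq)

lemma hit_prob_Suc:
  "hit_prob (Suc k) A = ((\<Sum>j<n. l / n * (if j \<in> A then 1 else hit_prob k A))
     + (\<Sum>j<n. l / 2 * hit_prob k (gossip_upd ((j + 1) mod n) j A)
              + l / 2 * hit_prob k (gossip_upd ((j + n - 1) mod n) j A))) / q"
proof -
  have source: "(\<Sum>S\<in>Pow {..<n}. P k S * of_bool (A \<inter> insert j S \<noteq> {}))
      = (if j \<in> A then 1 else hit_prob k A)" for j
    by (simp add: hit_prob_def sum_state_dist)
  have gossip: "(\<Sum>S\<in>Pow {..<n}. P k S * of_bool (A \<inter> gossip_upd i j S \<noteq> {}))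
      = hit_prob k (gossip_upd j i A)" for i j
    by (simp add: hit_prob_def gossip_upd_dual)
  have "hit_prob (Suc k) A = (\<Sum>S\<in>Pow {..<n}. P k S *
    ((le * of_bool (A \<inter> {} \<noteq> {}) + (\<Sum>j<n. l / n * of_bool (A \<inter> insert j S \<noteq> {}))
     + (\<Sum>j<n. l / 2 * of_bool (A \<inter> gossip_upd j ((j + 1) mod n) S \<noteq> {})
              + l / 2 * of_bool (A \<inter> gossip_upd j ((j + n - 1) mod n) S \<noteq> {}))) / q))"
    unfolding hit_prob_def by (rule sum_state_dist_Suc)
  also have "\<dots> = ((\<Sum>j<n. l / n * (\<Sum>S\<in>Pow {..<n}. P k S * of_bool (A \<inter> insert j S \<noteq> {})))
     + (\<Sum>j<n. l / 2 * (\<Sum>S\<in>Pow {..<n}. P k S * of_bool (A \<inter> gossip_upd j ((j + 1) mod n) S \<noteq> {}))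
             + l / 2 * (\<Sum>S\<in>Pow {..<n}. P k S * of_bool (A \<inter> gossip_upd j ((j + n - 1) mod n) S \<noteq> {})))) / q"
    by (simp add: sum_divide_distrib[symmetric] sum_distrib_left sum_distrib_right
        sum.distrib sum.swap[of _ "Pow {..<n}" "{..<n}"] algebra_simps
        del: sum_of_bool_eq sum_mult_of_bool_eq sum_of_bool_mult_eq)
  also have "\<dots> = ((\<Sum>j<n. l / n * (if j \<in> A then 1 else hit_prob k A))
     + (\<Sum>j<n. l / 2 * hit_prob k (gossip_upd ((j + 1) mod n) j A)
              + l / 2 * hit_prob k (gossip_upd ((j + n - 1) mod n) j A))) / q"
    by (simp only: source gossip)
  finally show ?thesis .
qed

lemma hit_prob_arc_Suc:
  assumes "1 \<le> m" "m \<le> n"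
  shows "q * hit_prob (Suc k) (arc n s m) = l * real m / real n
     + (l * (real n - real m) / real n + l * (real n - 1)) * hit_prob k (arc n s m)
     + l / 2 * hit_prob k (arc n (s + n - 1) (m + 1)) + l / 2 * hit_prob k (arc n s (m + 1))"
proof -
  let ?A = "arc n s m"
  have "q * hit_prob (Suc k) ?A = l / n * (\<Sum>j<n. if j \<in> ?A then 1 else hit_prob k ?A)
     + (l / 2 * (\<Sum>j<n. hit_prob k (gossip_upd ((j + 1) mod n) j ?A))
      + l / 2 * (\<Sum>j<n. hit_prob k (gossip_upd ((j + n - 1) mod n) j ?A)))"
    using total_rate_pos by (simp add: hit_prob_Suc sum.distrib sum_distrib_left)
  also have "\<dots> = l / n * (real m * 1 + (real n - real m) * hit_prob k ?A)
     + (l / 2 * ((real n - 1) * hit_prob k ?A + hit_prob k (arc n (s + n - 1) (m + 1)))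
      + l / 2 * ((real n - 1) * hit_prob k ?A + hit_prob k (arc n s (m + 1))))"
    using assms n_pos
    by (simp only: sum_if_mem_arc sum_gossip_upd_arc_from_succ sum_gossip_upd_arc_from_pred)
  finally show ?thesis
    using n_pos by (simp add: field_simps)
qed

lemma hit_prob_arc_Suc_dist:
  assumes m: "1 \<le> m" "m \<le> n"
    and "\<bar>hit_prob k (arc n s m) - arc_freshness le l n m\<bar> \<le> R"
    and "\<bar>hit_prob k (arc n (s + n - 1) (m + 1)) - arc_freshness le l n (m + 1)\<bar> \<le> R"
    and "\<bar>hit_prob k (arc n s (m + 1)) - arc_freshness le l n (m + 1)\<bar> \<le> R"
  shows "\<bar>hit_prob (Suc k) (arc n s m) - arc_freshness le l n m\<bar> \<le> (1 - le / q) * R"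
proof -
  let ?f = "arc_freshness le l n"
  let ?a = "hit_prob k (arc n s m) - ?f m"
    and ?b = "hit_prob k (arc n (s + n - 1) (m + 1)) - ?f (m + 1)"
    and ?c = "hit_prob k (arc n s (m + 1)) - ?f (m + 1)"
  define \<alpha> where "\<alpha> = l * (real n - real m) / real n + l * (real n - 1)"
  have \<alpha>_nonneg: "0 \<le> \<alpha>"
    using m l_pos by (simp add: \<alpha>_def)
  have "l * (real n - real m) / real n \<le> l"
    using m l_pos by (simp add: divide_le_eq)
  then have \<alpha>_le: "\<alpha> + l / 2 + l / 2 \<le> q - le"
    using n_pos by (simp add: \<alpha>_def total_rate_eq algebra_simps)
  have R_nonneg: "0 \<le> R"
    using assms(3) by linarith
  have step: "q * (hit_prob (Suc k) (arc n s m) - ?f m) = \<alpha> * ?a + l / 2 * ?b + l / 2 * ?c"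
    using hit_prob_arc_Suc[OF m, of k s] arc_freshness_eq[OF m]
    unfolding \<alpha>_def by (simp add: algebra_simps)
  have "q * \<bar>hit_prob (Suc k) (arc n s m) - ?f m\<bar> = \<bar>q * (hit_prob (Suc k) (arc n s m) - ?f m)\<bar>"
    using total_rate_pos by (simp add: abs_mult)
  also have "\<dots> = \<bar>\<alpha> * ?a + l / 2 * ?b + l / 2 * ?c\<bar>"
    by (simp only: step)
  also have "\<dots> \<le> \<bar>\<alpha> * ?a\<bar> + \<bar>l / 2 * ?b\<bar> + \<bar>l / 2 * ?c\<bar>"
    by (rule order_trans[OF abs_triangle_ineq add_right_mono[OF abs_triangle_ineq]])
  also have "\<dots> = \<alpha> * \<bar>?a\<bar> + l / 2 * \<bar>?b\<bar> + l / 2 * \<bar>?c\<bar>"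
    using \<alpha>_nonneg l_pos by (simp add: abs_mult)
  also have "\<dots> \<le> \<alpha> * R + l / 2 * R + l / 2 * R"
    using assms(3-5) \<alpha>_nonneg l_pos by (intro add_mono mult_left_mono) auto
  also have "\<dots> = (\<alpha> + l / 2 + l / 2) * R"
    by (simp only: distrib_right)
  also have "\<dots> \<le> (q - le) * R"
    using \<alpha>_le R_nonneg by (rule mult_right_mono)
  also have "\<dots> = q * ((1 - le / q) * R)"
    using total_rate_pos by (simp add: field_simps)
  finally show ?thesis
    using total_rate_pos by simp
qed

lemma hit_prob_arc_dist:
  assumes "1 \<le> m" "m \<le> n"
  shows "\<bar>hit_prob k (arc n s m) - arc_freshness le l n m\<bar> \<le> (1 - le / q) ^ k"
  using assms
proof (induction k arbitrary: s m)
  case 0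
  then show ?case
    using arc_freshness_bounds[of n m] by (simp add: hit_prob_0)
next
  case (Suc k)
  have longer_arc: "\<bar>hit_prob k (arc n s' (m + 1)) - arc_freshness le l n (m + 1)\<bar> \<le> (1 - le / q) ^ k"
    for s'
  proof (cases "m < n")
    case True
    then show ?thesis
      using Suc.IH[of "m + 1" s'] by simp
  next
    case False
    then have "arc n s' (m + 1) = arc n s' m" "arc_freshness le l n (m + 1) = arc_freshness le l n m"
      using Suc.prems n_pos by (simp_all add: arc_eq_lessThan arc_freshness_full)
    then show ?thesis
      using Suc.IH[of m s'] Suc.prems by simp
  qed
  show ?case
    using hit_prob_arc_Suc_dist[OF Suc.prems Suc.IH[OF Suc.prems] longer_arc longer_arc] by simp
qed

lemma expected_freshness_eq:
  "expected_freshness le l n S0 t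
    = (\<Sum>k. exp (- (q * t)) * (q * t) ^ k / fact k * hit_prob k (arc n 0 1))"
proof -
  have "arc n 0 1 = {0}"
    by (simp add: arc_def lessThan_Suc)
  then have "(\<Sum>S\<in>{S \<in> Pow {..<n}. 0 \<in> S}. P k S) = hit_prob k (arc n 0 1)" for k
    unfolding hit_prob_def by (intro sum.mono_neutral_cong_left) auto
  then show ?thesis
    by (simp add: expected_freshness_def)
qed

lemma expected_freshness_dist:
  assumes "0 \<le> t"
  shows "\<bar>expected_freshness le l n S0 t - arc_freshness le l n 1\<bar> \<le> exp (- le * t)"
proof -
  have "le \<le> q"
    using l_pos n_pos by (simp add: total_rate_eq)
  then have "0 \<le> 1 - le / q"
    using total_rate_pos by simp
  moreover have "0 \<le> q * t"
    using assms total_rate_pos by simp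
  moreover have "(1 - (1 - le / q)) * (q * t) = le * t"
    using total_rate_pos by simp
  ultimately show ?thesis
    unfolding expected_freshness_eq
    using poisson_mixture_dist_le[of "q * t" "1 - le / q" "\<lambda>k. hit_prob k (arc n 0 1)"]
      hit_prob_arc_dist[of 1] n_pos by simp
qed

lemma expected_freshness_tendsto:
  "(expected_freshness le l n S0 \<longlongrightarrow> arc_freshness le l n 1) at_top"
proof -
  have "filterlim (\<lambda>t. - le * t) at_bot at_top"
    using le_pos by (intro filterlim_tendsto_neg_mult_at_bot[OF tendsto_const _ filterlim_ident]) simp
  then have "((\<lambda>t. exp (- le * t)) \<longlongrightarrow> 0) at_top"
    by (rule filterlim_compose[OF exp_at_bot])
  moreover have "\<forall>\<^sub>F t in at_top.
      norm (expected_freshness le l n S0 t - arc_freshness le l n 1) \<le> exp (- le * t)"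
    using eventually_ge_at_top[of "0 :: real"]
    by eventually_elim (unfold real_norm_def, erule expected_freshness_dist)
  ultimately have "((\<lambda>t. expected_freshness le l n S0 t - arc_freshness le l n 1) \<longlongrightarrow> 0) at_top"
    by (rule Lim_null_comparison[rotated])
  then show ?thesis
    by (simp add: LIM_zero_iff)
qed

lemma avg_freshness_eq: "avg_freshness le l n S0 = arc_freshness le l n 1"
  unfolding avg_freshness_def using expected_freshness_tendsto by (intro tendsto_Lim) auto

end

lemma expected_freshness_no_nodes: "expected_freshness le l 0 S = (\<lambda>t. 0)"
proof -
  have "{S \<in> Pow {..<0 :: nat}. 0 \<in> S} = {}"
    by auto
  then show ?thesis
    unfolding expected_freshness_def by (simp only:) simp
qed

section \<open>Asymptotics in the number of nodes\<close>

context positive_rates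
begin

definition \<kappa> :: real where "\<kappa> = l / le"

definition scaled_arc_limit :: "nat \<Rightarrow> real" where
  "scaled_arc_limit m = \<kappa> * real m + \<kappa>\<^sup>2"

definition scaled_arc_error_bound :: "nat \<Rightarrow> real" where
  "scaled_arc_error_bound m = \<kappa>\<^sup>2 * (real m)\<^sup>2 + 3 * \<kappa> ^ 3 * real m + \<kappa> ^ 3 + 3 * \<kappa> ^ 4"

lemma kappa_pos: "0 < \<kappa>"
  using le_pos l_pos by (simp add: \<kappa>_def)

lemma scaled_arc_limit_rec: "(1 + \<kappa>) * scaled_arc_limit m = \<kappa> * real m + \<kappa> * scaled_arc_limit (Suc m)"
  by (simp add: scaled_arc_limit_def power2_eq_square algebra_simps)

lemma scaled_arc_error_bound_rec:
  "(1 + \<kappa>) * scaled_arc_error_bound m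
    = \<kappa> * scaled_arc_error_bound (Suc m) + \<kappa> * real m * scaled_arc_limit m"
  by (simp add: scaled_arc_error_bound_def scaled_arc_limit_def power2_eq_square
      power3_eq_cube power4_eq_xxxx algebra_simps)

lemma scaled_arc_freshness_rec:
  assumes "m < n"
  shows "(1 + \<kappa> + \<kappa> * real m / real n) * (real n * arc_freshness le l n m)
    = \<kappa> * real m + \<kappa> * (real n * arc_freshness le l n (Suc m))"
proof -
  have "1 + \<kappa> + \<kappa> * real m / real n = (le + l * real m / real n + l) / le"
    unfolding \<kappa>_def using le_pos by (simp add: field_simps)
  then have "(1 + \<kappa> + \<kappa> * real m / real n) * (real n * arc_freshness le l n m)
      = real n / le * ((le + l * real m / real n + l) * arc_freshness le l n m)"
    by (simp add: ac_simps)
  also have "\<dots> = real n / le * (l * real m / real n + l * arc_freshness le l n (Suc m))"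
    by (simp only: arc_freshness_rec[OF assms])
  also have "\<dots> = \<kappa> * real m + \<kappa> * (real n * arc_freshness le l n (Suc m))"
    using assms le_pos unfolding \<kappa>_def by (simp add: field_simps)
  finally show ?thesis .
qed

lemma scaled_arc_error_step:
  assumes "m < n"
  shows "\<bar>real n * arc_freshness le l n m - scaled_arc_limit m\<bar>
    \<le> \<kappa> / (1 + \<kappa>) * \<bar>real n * arc_freshness le l n (Suc m) - scaled_arc_limit (Suc m)\<bar>
      + \<kappa> / (1 + \<kappa>) * (real m * scaled_arc_limit m / real n)"
proof -
  let ?e = "\<lambda>j. real n * arc_freshness le l n j - scaled_arc_limit j"
  define d where "d = 1 + \<kappa> + \<kappa> * real m / real n"
  have d_ge: "1 + \<kappa> \<le> d"
    using kappa_pos by (simp add: d_def)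
  have d_pos: "0 < d"
    using d_ge kappa_pos by simp
  have "d * (real n * arc_freshness le l n m)
      = \<kappa> * real m + \<kappa> * (real n * arc_freshness le l n (Suc m))"
    unfolding d_def by (rule scaled_arc_freshness_rec[OF assms])
  moreover have "d * scaled_arc_limit m
      = \<kappa> * real m + \<kappa> * scaled_arc_limit (Suc m) + \<kappa> * (real m / real n) * scaled_arc_limit m"
    using scaled_arc_limit_rec[of m] unfolding d_def by (simp add: algebra_simps)
  ultimately have "d * ?e m = \<kappa> * ?e (Suc m) - \<kappa> * (real m / real n) * scaled_arc_limit m"
    by (simp add: algebra_simps)
  then have e_eq: "?e m = \<kappa> / d * ?e (Suc m) - \<kappa> / d * (real m * scaled_arc_limit m / real n)"
    using d_pos by (simp add: field_simps)
  have "\<bar>?e m\<bar> \<le> \<bar>\<kappa> / d * ?e (Suc m)\<bar> + \<bar>\<kappa> / d * (real m * scaled_arc_limit m / real n)\<bar>"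
    by (subst e_eq) (rule abs_triangle_ineq4)
  also have "\<dots> = \<kappa> / d * \<bar>?e (Suc m)\<bar> + \<kappa> / d * (real m * scaled_arc_limit m / real n)"
    using d_pos kappa_pos by (simp add: abs_mult scaled_arc_limit_def)
  also have "\<dots> \<le> \<kappa> / (1 + \<kappa>) * \<bar>?e (Suc m)\<bar> + \<kappa> / (1 + \<kappa>) * (real m * scaled_arc_limit m / real n)"
    using d_ge kappa_pos
    by (intro add_mono mult_right_mono divide_left_mono) (simp_all add: scaled_arc_limit_def)
  finally show ?thesis .
qed

lemma scaled_arc_error_le:
  assumes "0 < n" "m \<le> n"
  shows "\<bar>real n * arc_freshness le l n m - scaled_arc_limit m\<bar>
    \<le> scaled_arc_error_bound m / real n
      + (\<kappa> / (1 + \<kappa>)) ^ (n - m) * \<bar>real n * arc_freshness le l n n - scaled_arc_limit n\<bar>"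
  using assms(2)
proof (induction m rule: inc_induct)
  case base
  have "0 \<le> scaled_arc_error_bound n"
    using kappa_pos by (simp add: scaled_arc_error_bound_def)
  then show ?case
    using assms(1) by simp
next
  case (step m)
  let ?\<theta> = "\<kappa> / (1 + \<kappa>)" and ?E = "\<bar>real n * arc_freshness le l n n - scaled_arc_limit n\<bar>"
  have \<theta>_pos: "0 < ?\<theta>"
    using kappa_pos by simp
  have "scaled_arc_error_bound m = (1 + \<kappa>) * scaled_arc_error_bound m / (1 + \<kappa>)"
    using kappa_pos by simp
  also have "\<dots> = (\<kappa> * scaled_arc_error_bound (Suc m) + \<kappa> * real m * scaled_arc_limit m) / (1 + \<kappa>)"
    by (simp only: scaled_arc_error_bound_rec)
  also have "\<dots> = ?\<theta> * scaled_arc_error_bound (Suc m) + ?\<theta> * (real m * scaled_arc_limit m)"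
    by (simp add: add_divide_distrib)
  finally have "scaled_arc_error_bound m
      = ?\<theta> * scaled_arc_error_bound (Suc m) + ?\<theta> * (real m * scaled_arc_limit m)" .
  then have bound_rec: "scaled_arc_error_bound m / real n
      = (?\<theta> * scaled_arc_error_bound (Suc m) + ?\<theta> * (real m * scaled_arc_limit m)) / real n"
    by (rule arg_cong)
  have "\<bar>real n * arc_freshness le l n m - scaled_arc_limit m\<bar>
      \<le> ?\<theta> * \<bar>real n * arc_freshness le l n (Suc m) - scaled_arc_limit (Suc m)\<bar>
        + ?\<theta> * (real m * scaled_arc_limit m / real n)"
    using step.hyps(2) by (rule scaled_arc_error_step)
  also have "\<dots> \<le> ?\<theta> * (scaled_arc_error_bound (Suc m) / real n + ?\<theta> ^ (n - Suc m) * ?E)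
        + ?\<theta> * (real m * scaled_arc_limit m / real n)"
    using step.IH \<theta>_pos by (intro add_mono mult_left_mono) simp_all
  also have "\<dots> = (?\<theta> * scaled_arc_error_bound (Suc m) + ?\<theta> * (real m * scaled_arc_limit m)) / real n
      + (?\<theta> * ?\<theta> ^ (n - Suc m)) * ?E"
    by (simp add: add_divide_distrib algebra_simps)
  also have "?\<theta> * ?\<theta> ^ (n - Suc m) = ?\<theta> ^ (n - m)"
    using step.hyps(2) by (metis Suc_diff_Suc power_Suc)
  finally show ?case
    by (simp only: bound_rec)
qed

lemma scaled_arc_freshness_tendsto: "(\<lambda>n. real n * arc_freshness le l n 1) \<longlonglongrightarrow> \<kappa> + \<kappa>\<^sup>2"
proof -
  define \<theta> where "\<theta> = \<kappa> / (1 + \<kappa>)"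
  have \<theta>: "0 < \<theta>" "\<theta> < 1"
    using kappa_pos by (simp_all add: \<theta>_def)
  define g where "g n = scaled_arc_error_bound 1 / real n + \<theta> ^ (n - 1) * (real n * (\<theta> + \<kappa>) + \<kappa>\<^sup>2)"
    for n
  have bound: "\<bar>real n * arc_freshness le l n 1 - (\<kappa> + \<kappa>\<^sup>2)\<bar> \<le> g n" if "0 < n" for n
  proof -
    have "arc_freshness le l n n = \<theta>"
      using le_pos l_pos by (simp add: arc_freshness_full \<theta>_def \<kappa>_def field_simps)
    then have "\<bar>real n * arc_freshness le l n n - scaled_arc_limit n\<bar> \<le> real n * (\<theta> + \<kappa>) + \<kappa>\<^sup>2"
      using \<theta> kappa_pos by (simp add: scaled_arc_limit_def abs_le_iff algebra_simps)
    then have "\<theta> ^ (n - 1) * \<bar>real n * arc_freshness le l n n - scaled_arc_limit n\<bar>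
        \<le> \<theta> ^ (n - 1) * (real n * (\<theta> + \<kappa>) + \<kappa>\<^sup>2)"
      using \<theta> by (intro mult_left_mono) simp_all
    then show ?thesis
      using scaled_arc_error_le[of n 1] that unfolding g_def \<theta>_def
      by (simp add: scaled_arc_limit_def)
  qed
  have "g \<longlonglongrightarrow> 0"
  proof (rule LIMSEQ_offset[where k = 1])
    have "(\<lambda>n. scaled_arc_error_bound 1 * inverse (real (Suc n)) + (\<theta> + \<kappa>) * (real n * \<theta> ^ n)
        + (\<theta> + \<kappa> + \<kappa>\<^sup>2) * \<theta> ^ n) \<longlonglongrightarrow> scaled_arc_error_bound 1 * 0 + (\<theta> + \<kappa>) * 0 + (\<theta> + \<kappa> + \<kappa>\<^sup>2) * 0"
      using \<theta> by (intro tendsto_intros LIMSEQ_inverse_real_of_nat powser_times_n_limit_0) simp_all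
    moreover have "g (n + 1) = scaled_arc_error_bound 1 * inverse (real (Suc n)) + (\<theta> + \<kappa>) * (real n * \<theta> ^ n)
        + (\<theta> + \<kappa> + \<kappa>\<^sup>2) * \<theta> ^ n" for n
      by (simp add: g_def field_simps)
    ultimately show "(\<lambda>n. g (n + 1)) \<longlonglongrightarrow> 0"
      by simp
  qed
  moreover have "\<forall>\<^sub>F n in sequentially. norm (real n * arc_freshness le l n 1 - (\<kappa> + \<kappa>\<^sup>2)) \<le> g n"
    using bound by (intro eventually_sequentiallyI[of 1]) simp
  ultimately have "(\<lambda>n. real n * arc_freshness le l n 1 - (\<kappa> + \<kappa>\<^sup>2)) \<longlonglongrightarrow> 0"
    by (rule Lim_null_comparison[rotated])
  then show ?thesis
    by (simp add: LIM_zero_iff)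
qed

end

lemma LIMSEQ_zero_if_times_real_of_nat:
  fixes X :: "nat \<Rightarrow> real"
  assumes "(\<lambda>n. real n * X n) \<longlonglongrightarrow> c"
  shows "X \<longlonglongrightarrow> 0"
proof -
  have "(\<lambda>n. inverse (real n) * (real n * X n)) \<longlonglongrightarrow> 0 * c"
    by (intro tendsto_mult lim_inverse_n assms)
  moreover have "\<forall>\<^sub>F n in sequentially. inverse (real n) * (real n * X n) = X n"
    by (intro eventually_sequentiallyI[of 1]) simp
  ultimately show ?thesis
    by (simp add: tendsto_cong)
qed

theorem theorem3:
  fixes le l :: real and S0 :: "nat \<Rightarrow> nat set"
  assumes "le > 0" and "l > 0"
    and "\<And>n. S0 n \<subseteq> {..<n}"
  shows "(\<forall>n. \<exists>L. (expected_freshness le l n (S0 n) \<longlongrightarrow> L) at_top)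
       \<and> (\<lambda>n. avg_freshness le l n (S0 n)) \<longlonglongrightarrow> 0
       \<and> (\<lambda>n. real n * avg_freshness le l n (S0 n))
            \<longlonglongrightarrow> 1 / (le / l) + 1 / (le / l) ^ 2"
proof -
  interpret positive_rates le l
    using assms(1,2) by unfold_locales
  have freshness: "(expected_freshness le l n (S0 n) \<longlongrightarrow> arc_freshness le l n 1) at_top
      \<and> avg_freshness le l n (S0 n) = arc_freshness le l n 1" if "0 < n" for n
  proof -
    interpret ring_gossip le l n "S0 n"
      using that assms(3) by unfold_locales
    show ?thesis
      using expected_freshness_tendsto avg_freshness_eq by simp
  qed
  then have converges: "\<forall>n. \<exists>L. (expected_freshness le l n (S0 n) \<longlongrightarrow> L) at_top"
    using expected_freshness_no_nodes by (metis gr0I tendsto_const)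
  have "\<forall>\<^sub>F n in sequentially. real n * arc_freshness le l n 1 = real n * avg_freshness le l n (S0 n)"
    using freshness by (intro eventually_sequentiallyI[of 1]) simp
  then have scaled: "(\<lambda>n. real n * avg_freshness le l n (S0 n)) \<longlonglongrightarrow> \<kappa> + \<kappa>\<^sup>2"
    using scaled_arc_freshness_tendsto by (rule Lim_transform_eventually[rotated])
  moreover have "\<kappa> + \<kappa>\<^sup>2 = 1 / (le / l) + 1 / (le / l) ^ 2"
    by (simp add: \<kappa>_def power_divide)
  ultimately show ?thesis
    using converges LIMSEQ_zero_if_times_real_of_nat[OF scaled] by simp
qed

end
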